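(* In the setting described in the context, let $(x^k)$, $(\bar x^k)$, $(\alpha_k)$ be the sequences generated by the Conceptual Algorithm (with either Method 1 or Method 2). Then for every $k$ for which these are defined: (i) $\dfrac{x^k-\bar x^k}{\alpha_k}-(A_2x^k-A_2\bar x^k)\in (A_2+B)\bar x^k+A_1x^k$; (ii) $\operatorname{zer}(A+B)\subseteq T_k$.
   Context: Let $\mathcal H$ be a real Hilbert space with inner product $\langle\cdot,\cdot\rangle$ and norm $\|\cdot\|$. Let $A_1:\mathcal H\to\mathcal H$ be $\beta$-cocoercive for some $\beta>0$ (i.e. $\langle A_1x-A_1y,x-y\rangle\ge\beta\|A_1x-A_1y\|^2$ for all $x,y$), let $A_2:\mathcal H\to\mathcal H$ be maximally monotone and uniformly continuous, let $B:\mathcal H\rightrightarrows\mathcal H$ be maximally monotone, and set $A:=A_1+A_2$. Assume $\operatorname{zer}(A+B):=\{x:0\in Ax+Bx\}\neq\emptyset$. $J_{\alpha B}:=(I+\alpha B)^{-1}$ for $\alpha>0$, and $P_C$ denotes the orthogonal projection onto a nonempty closed convex set $C$. Fix $\theta,\delta\in(0,1)$, $\bar\delta>0$ with $1-\delta-\bar\delta>0$, and $\alpha_{-1}>0$ with $\alpha_{-1}\le4\beta\bar\delta$. Conceptual Algorithm: pick $x^0\in\mathcal H$. Given $x^k$ and $\alpha_{k-1}$, for $j\in\mathbb N$ let $\bar x^k_j:=J_{\alpha_{k-1}\theta^jB}(x^k-\alpha_{k-1}\theta^jAx^k)$ and let $j(k)$ be the smallest $j\in\mathbb N$ with $\alpha_{k-1}\theta^j\langle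 A_2x^k-A_2\bar x^k_j,x^k-\bar x^k_j\rangle\le\delta\|x^k-\bar x^k_j\|^2$. Set $\alpha_k:=\alpha_{k-1}\theta^{j(k)}$, $\bar x^k:=J_{\alpha_kB}(x^k-\alpha_kAx^k)$, $r_k:=\frac{\bar\delta}{\alpha_k}\|x^k-\bar x^k\|^2$, $T_k:=\{x\in\mathcal H:\langle \frac{x^k-\bar x^k}{\alpha_k}-(A_2x^k-A_2\bar x^k),x-\bar x^k\rangle\le r_k\}$ and $\Gamma_k:=\{x\in\mathcal H:\langle x^0-x^k,x-x^k\rangle\le0\}$. Method 1 sets $x^{k+1}:=P_{T_k}(x^k)$; Method 2 sets $x^{k+1}:=P_{T_k\cap\Gamma_k}(x^0)$. The algorithm stops if $x^{k+1}=x^k$. *)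

theory Defs
  imports "HOL-Analysis.Analysis"
begin

text \<open>Real Hilbert space: type class real_inner + complete_space.
  Set-valued operators are modelled as functions 'a \<Rightarrow> 'a set.\<close>

definition monotone_op :: "('a::real_inner \<Rightarrow> 'a set) \<Rightarrow> bool" where
  "monotone_op B \<longleftrightarrow> (\<forall>x y u v. u \<in> B x \<longrightarrow> v \<in> B y \<longrightarrow> inner (u - v) (x - y) \<ge> 0)"

definition maximally_monotone :: "('a::real_inner \<Rightarrow> 'a set) \<Rightarrow> bool" where
  "maximally_monotone B \<longleftrightarrow> monotone_op B \<and>
     (\<forall>x u. (\<forall>y v. v \<in> B y \<longrightarrow> inner (u - v) (x - y) \<ge> 0) \<longrightarrow> u \<in> B x)"

definition cocoercive :: "real \<Rightarrow> ('a::real_inner \<Rightarrow> 'a) \<Rightarrow> bool" where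
  "cocoercive \<beta> A \<longleftrightarrow> (\<forall>x y. inner (A x - A y) (x - y) \<ge> \<beta> * (norm (A x - A y))\<^sup>2)"

definition zer_sum :: "('a::real_vector \<Rightarrow> 'a) \<Rightarrow> ('a \<Rightarrow> 'a) \<Rightarrow> ('a \<Rightarrow> 'a set) \<Rightarrow> 'a set" where
  "zer_sum A1 A2 B = {x. 0 \<in> (\<lambda>b. A1 x + A2 x + b) ` B x}"

text \<open>Resolvent J_{\<alpha>B} = (I + \<alpha>B)^{-1}: the (unique, for maximally monotone B) y
  with z \<in> y + \<alpha> B y.\<close>
definition resolvent :: "real \<Rightarrow> ('a::real_vector \<Rightarrow> 'a set) \<Rightarrow> 'a \<Rightarrow> 'a" where
  "resolvent \<alpha> B z = (THE y. z \<in> (\<lambda>b. y + \<alpha> *\<^sub>R b) ` B y)"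

definition proj :: "'a::real_inner set \<Rightarrow> 'a \<Rightarrow> 'a" where
  "proj C a = (THE p. p \<in> C \<and> (\<forall>y\<in>C. dist a p \<le> dist a y))"

definition fb_point :: "('a::real_vector \<Rightarrow> 'a) \<Rightarrow> ('a \<Rightarrow> 'a) \<Rightarrow> ('a \<Rightarrow> 'a set) \<Rightarrow> real \<Rightarrow> 'a \<Rightarrow> 'a" where
  "fb_point A1 A2 B a x = resolvent a B (x - a *\<^sub>R (A1 x + A2 x))"

definition ls_ok :: "('a::real_inner \<Rightarrow> 'a) \<Rightarrow> ('a \<Rightarrow> 'a) \<Rightarrow> ('a \<Rightarrow> 'a set) \<Rightarrow> real \<Rightarrow> real \<Rightarrow> real \<Rightarrow> 'a \<Rightarrow> nat \<Rightarrow> bool" where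
  "ls_ok A1 A2 B \<theta> \<delta> a x j \<longleftrightarrow>
     (let xb = fb_point A1 A2 B (a * \<theta> ^ j) x in
      (a * \<theta> ^ j) * inner (A2 x - A2 xb) (x - xb) \<le> \<delta> * (norm (x - xb))\<^sup>2)"

definition T_set :: "('a::real_inner \<Rightarrow> 'a) \<Rightarrow> ('a \<Rightarrow> 'a) \<Rightarrow> ('a \<Rightarrow> 'a set) \<Rightarrow> real \<Rightarrow> real \<Rightarrow> 'a \<Rightarrow> 'a set" where
  "T_set A1 A2 B \<delta>bar a x =
     (let xb = fb_point A1 A2 B a x;
          r = (\<delta>bar / a) * (norm (x - xb))\<^sup>2
      in {z. inner ((1 / a) *\<^sub>R (x - xb) - (A2 x - A2 xb)) (z - xb) \<le> r})"

definition Gamma_set :: "'a::real_inner \<Rightarrow> 'a \<Rightarrow> 'a set" where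
  "Gamma_set x0 x = {z. inner (x0 - x) (z - x) \<le> 0}"

text \<open>Step size \<alpha>_{k-1}, with \<alpha>_{-1} = am1.\<close>
definition prev_step :: "real \<Rightarrow> (nat \<Rightarrow> real) \<Rightarrow> nat \<Rightarrow> real" where
  "prev_step am1 \<alpha> k = (if k = 0 then am1 else \<alpha> (k - 1))"

text \<open>The Conceptual Algorithm (method meth \<in> {1,2}) has performed iterations 0..K:
  for every k \<le> K the line search at x^k terminates and \<alpha>_k is set accordingly;
  for every k < K, x^{k+1} is computed by the projection step and the algorithm
  did not stop (x^{k+1} \<noteq> x^k).  x^0 = x 0.\<close>
definition conceptual_alg ::
  "('a::real_inner \<Rightarrow> 'a) \<Rightarrow> ('a \<Rightarrow> 'a) \<Rightarrow> ('a \<Rightarrow> 'a set) \<Rightarrow> real \<Rightarrow> real \<Rightarrow> real \<Rightarrow> real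
   \<Rightarrow> nat \<Rightarrow> (nat \<Rightarrow> 'a) \<Rightarrow> (nat \<Rightarrow> real) \<Rightarrow> nat \<Rightarrow> bool" where
  "conceptual_alg A1 A2 B \<theta> \<delta> \<delta>bar am1 meth x \<alpha> K \<longleftrightarrow>
     (\<forall>k\<le>K. (\<exists>j. ls_ok A1 A2 B \<theta> \<delta> (prev_step am1 \<alpha> k) (x k) j) \<and>
             \<alpha> k = prev_step am1 \<alpha> k * \<theta> ^ (LEAST j. ls_ok A1 A2 B \<theta> \<delta> (prev_step am1 \<alpha> k) (x k) j)) \<and>
     (\<forall>k<K. x (Suc k) =
              (if meth = (1::nat) then proj (T_set A1 A2 B \<delta>bar (\<alpha> k) (x k)) (x k)
               else proj (T_set A1 A2 B \<delta>bar (\<alpha> k) (x k) \<inter> Gamma_set (x 0) (x k)) (x 0))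
            \<and> x (Suc k) \<noteq> x k)"

end

theory Submission
  imports Defs
begin

(* Part (i) is the resolvent equation x - a (A1 x + A2 x) = p + a b with b in B p, for
   p = J_{aB}(x - a A x), rearranged.  For (ii), pair that vector with z - p, z in zer(A + B):
   monotonicity of A2 and B and cocoercivity of A1 bound the pairing by
   |D| |x - p| - beta |D|^2 <= |x - p|^2 / (4 beta), where D = A1 x - A1 z, and this is at most
   r_k because the line search never enlarges the step: alpha_k <= alpha_{-1} <= 4 beta deltabar.

   The substance is that J_{aB} is defined on the whole space (Minty's theorem).  It follows from
   the Fitzpatrick function F_B: maximality gives F_B(y, u) >= <y, u>, so F_B + |.|^2/2 is bounded
   below; it is strongly convex and lower semicontinuous, so by completeness it attains its
   minimum at some (y, u).  The optimality condition there reads <w + y, v + u> >= |y + u|^2 on the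
   graph of B, so maximality puts -y in B(-u), and testing with that point gives u = -y. *)

lemma norm_add_sq:
  fixes y u :: "'a::real_inner"
  shows "(norm (y + u))\<^sup>2 = (norm y)\<^sup>2 + 2 * inner y u + (norm u)\<^sup>2"
  using dot_norm[of y u] by simp

lemma norm_add_scaleR_sq:
  fixes y a :: "'a::real_inner"
  shows "(norm (y + t *\<^sub>R a))\<^sup>2 = (norm y)\<^sup>2 + 2 * t * inner y a + t\<^sup>2 * (norm a)\<^sup>2"
  by (simp add: norm_add_sq power_mult_distrib)

lemma norm_midpoint_sq:
  fixes y1 y2 :: "'a::real_inner"
  shows "(norm ((1/2) *\<^sub>R y1 + (1/2) *\<^sub>R y2))\<^sup>2
           = ((norm y1)\<^sup>2 + (norm y2)\<^sup>2) / 2 - (norm (y1 - y2))\<^sup>2 / 4"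
proof -
  have "(norm ((1/2) *\<^sub>R y1 + (1/2) *\<^sub>R y2))\<^sup>2 = ((norm y1)\<^sup>2 + 2 * inner y1 y2 + (norm y2)\<^sup>2) / 4"
    using norm_add_sq[of y1 y2] by (simp add: power_divide flip: scaleR_right_distrib)
  moreover have "(norm (y1 - y2))\<^sup>2 = (norm y1)\<^sup>2 - 2 * inner y1 y2 + (norm y2)\<^sup>2"
    using norm_add_sq[of y1 "- y2"] by simp
  ultimately show ?thesis by (simp add: field_simps)
qed

lemma le_if_le_add_small_multiples:
  fixes a b D :: real
  assumes "\<And>t. 0 < t \<Longrightarrow> t \<le> 1 \<Longrightarrow> a \<le> b + t * D"
  shows "a \<le> b"
proof (rule field_le_epsilon)
  fix e :: real assume "0 < e"
  define t where "t = min 1 (e / (\<bar>D\<bar> + 1))"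
  have t: "0 < t" "t \<le> 1" using \<open>0 < e\<close> by (auto simp: t_def)
  have "t * D \<le> t * \<bar>D\<bar>" using t by (simp add: mult_left_mono)
  also have "\<dots> \<le> e / (\<bar>D\<bar> + 1) * \<bar>D\<bar>" by (rule mult_right_mono) (simp_all add: t_def)
  also have "\<dots> \<le> e" using \<open>0 < e\<close> by (simp add: field_simps)
  finally show "a \<le> b + e" using assms[OF t] by linarith
qed

lemma Cauchy_if_norm_diff_sq_le:
  fixes X :: "nat \<Rightarrow> 'a::real_normed_vector"
  assumes bound: "\<And>p q. (norm (X p - X q))\<^sup>2 \<le> e p + e q" and "e \<longlonglongrightarrow> 0"
  shows "Cauchy X"
proof (rule CauchyI)
  fix r :: real assume "0 < r"
  then obtain N where N: "\<forall>n\<ge>N. norm (e n - 0) < r\<^sup>2 / 2"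
    using LIMSEQ_D[OF \<open>e \<longlonglongrightarrow> 0\<close>, of "r\<^sup>2 / 2"] by auto
  have "norm (X p - X q) < r" if "p \<ge> N" "q \<ge> N" for p q
  proof -
    have "e p < r\<^sup>2 / 2" "e q < r\<^sup>2 / 2" using N that by auto
    then have "(norm (X p - X q))\<^sup>2 < r\<^sup>2" using bound[of p q] by linarith
    then show ?thesis using \<open>0 < r\<close> by (simp add: power_less_imp_less_base)
  qed
  then show "\<exists>N. \<forall>p\<ge>N. \<forall>q\<ge>N. norm (X p - X q) < r" by blast
qed

section \<open>Minty's theorem via the Fitzpatrick function\<close>

lemma monotone_opD:
  assumes "monotone_op B" "u \<in> B x" "v \<in> B y"
  shows "0 \<le> inner (u - v) (x - y)"
  using assms unfolding monotone_op_def by blast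

lemma maximally_monotone_imp_monotone_op: "maximally_monotone B \<Longrightarrow> monotone_op B"
  by (simp add: maximally_monotone_def)

lemma maximally_monotoneD:
  assumes "maximally_monotone B" "\<And>y v. v \<in> B y \<Longrightarrow> 0 \<le> inner (u - v) (x - y)"
  shows "u \<in> B x"
  using assms unfolding maximally_monotone_def by blast

lemma maximally_monotone_graph_nonempty:
  assumes "maximally_monotone B"
  obtains v w where "w \<in> B v"
proof (cases "\<exists>v w. w \<in> B v")
  case False
  then have "0 \<in> B 0" by (intro maximally_monotoneD[OF assms]) auto
  with False show ?thesis by blast
qed (use that in blast)

(* The Fitzpatrick function F_B(y, u) = sup {<y, w> + <v, u> - <v, w> | w in B v} can be +infinity,
   so it is handled through the relation F_B(y, u) <= c. *)

definition fitzpatrick_le :: "('a::real_inner \<Rightarrow> 'a set) \<Rightarrow> 'a \<Rightarrow> 'a \<Rightarrow> real \<Rightarrow> bool" where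
  "fitzpatrick_le B y u c \<longleftrightarrow> (\<forall>v w. w \<in> B v \<longrightarrow> inner y w + inner v u - inner v w \<le> c)"

lemma fitzpatrick_le_graph:
  assumes "monotone_op B" "w \<in> B v"
  shows "fitzpatrick_le B v w (inner v w)"
  unfolding fitzpatrick_le_def
proof (intro allI impI)
  fix v' w' assume "w' \<in> B v'"
  then have "0 \<le> inner (w - w') (v - v')" using monotone_opD[OF assms(1)] assms(2) by blast
  then show "inner v w' + inner v' w - inner v' w' \<le> inner v w"
    by (simp add: inner_diff_left inner_diff_right inner_commute)
qed

lemma inner_le_fitzpatrick:
  assumes "maximally_monotone B" "fitzpatrick_le B y u c"
  shows "inner y u \<le> c"
proof (rule ccontr)
  assume "\<not> inner y u \<le> c"
  have "u \<in> B y"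
  proof (rule maximally_monotoneD[OF assms(1)])
    fix v w assume "w \<in> B v"
    then have "inner y w + inner v u - inner v w \<le> c"
      using assms(2) by (simp add: fitzpatrick_le_def)
    moreover have "inner (u - w) (y - v) = inner y u - (inner y w + inner v u - inner v w)"
      by (simp add: inner_diff_left inner_diff_right inner_commute)
    ultimately show "0 \<le> inner (u - w) (y - v)" using \<open>\<not> inner y u \<le> c\<close> by linarith
  qed
  then have "inner y u + inner y u - inner y u \<le> c"
    using assms(2) unfolding fitzpatrick_le_def by blast
  with \<open>\<not> inner y u \<le> c\<close> show False by simp
qed

lemma fitzpatrick_le_convex:
  assumes "fitzpatrick_le B y1 u1 c1" "fitzpatrick_le B y2 u2 c2" "0 \<le> t" "t \<le> 1"
  shows "fitzpatrick_le B ((1 - t) *\<^sub>R y1 + t *\<^sub>R y2) ((1 - t) *\<^sub>R u1 + t *\<^sub>R u2) ((1 - t) * c1 + t * c2)"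
  unfolding fitzpatrick_le_def
proof (intro allI impI)
  fix v w assume "w \<in> B v"
  then have "inner y1 w + inner v u1 - inner v w \<le> c1" "inner y2 w + inner v u2 - inner v w \<le> c2"
    using assms(1,2) by (auto simp: fitzpatrick_le_def)
  then have "(1 - t) * (inner y1 w + inner v u1 - inner v w) + t * (inner y2 w + inner v u2 - inner v w)
      \<le> (1 - t) * c1 + t * c2"
    using assms(3,4) by (intro add_mono mult_left_mono) auto
  then show "inner ((1 - t) *\<^sub>R y1 + t *\<^sub>R y2) w + inner v ((1 - t) *\<^sub>R u1 + t *\<^sub>R u2) - inner v w
      \<le> (1 - t) * c1 + t * c2"
    by (simp add: algebra_simps)
qed

lemma fitzpatrick_le_limit:
  assumes "Y \<longlonglongrightarrow> y" "U \<longlonglongrightarrow> u" "C \<longlonglongrightarrow> c" "\<And>n. fitzpatrick_le B (Y n) (U n) (C n)"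
  shows "fitzpatrick_le B y u c"
  unfolding fitzpatrick_le_def
proof (intro allI impI)
  fix v w assume "w \<in> B v"
  have lim: "(\<lambda>n. inner (Y n) w + inner v (U n) - inner v w) \<longlonglongrightarrow> inner y w + inner v u - inner v w"
    using assms(1,2) by (intro tendsto_intros)
  have "\<forall>n. inner (Y n) w + inner v (U n) - inner v w \<le> C n"
    using assms(4) \<open>w \<in> B v\<close> by (simp add: fitzpatrick_le_def)
  then show "inner y w + inner v u - inner v w \<le> c"
    using LIMSEQ_le[OF lim assms(3)] by blast
qed

lemma fitzpatrick_penalized_nonneg:
  assumes "maximally_monotone B" "fitzpatrick_le B y u c"
  shows "0 \<le> c + ((norm y)\<^sup>2 + (norm u)\<^sup>2) / 2"
proof -
  have "0 \<le> (norm (y + u))\<^sup>2 / 2" by simp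
  also have "\<dots> = inner y u + ((norm y)\<^sup>2 + (norm u)\<^sup>2) / 2" by (simp add: norm_add_sq)
  finally show ?thesis using inner_le_fitzpatrick[OF assms] by linarith
qed

lemma fitzpatrick_penalized_near_min_close:
  assumes minimal: "\<And>y u c. fitzpatrick_le B y u c \<Longrightarrow> m \<le> c + ((norm y)\<^sup>2 + (norm u)\<^sup>2) / 2"
    and "fitzpatrick_le B y1 u1 c1" "fitzpatrick_le B y2 u2 c2"
  shows "(norm (y1 - y2))\<^sup>2 + (norm (u1 - u2))\<^sup>2
           \<le> 4 * ((c1 + ((norm y1)\<^sup>2 + (norm u1)\<^sup>2) / 2) + (c2 + ((norm y2)\<^sup>2 + (norm u2)\<^sup>2) / 2) - 2 * m)"
proof -
  have "fitzpatrick_le B ((1/2) *\<^sub>R y1 + (1/2) *\<^sub>R y2) ((1/2) *\<^sub>R u1 + (1/2) *\<^sub>R u2) ((c1 + c2) / 2)"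
    using fitzpatrick_le_convex[OF assms(2,3), of "1/2"] by (simp add: add_divide_distrib)
  from minimal[OF this] show ?thesis by (simp add: norm_midpoint_sq field_simps)
qed

lemma fitzpatrick_penalized_minimizing_converges:
  fixes Y U :: "nat \<Rightarrow> 'a::{real_inner,complete_space}"
  assumes minimal: "\<And>y u c. fitzpatrick_le B y u c \<Longrightarrow> m \<le> c + ((norm y)\<^sup>2 + (norm u)\<^sup>2) / 2"
    and feasible: "\<And>n. fitzpatrick_le B (Y n) (U n) (C n)"
    and minimizing: "(\<lambda>n. C n + ((norm (Y n))\<^sup>2 + (norm (U n))\<^sup>2) / 2) \<longlonglongrightarrow> m"
  obtains y0 u0 where "fitzpatrick_le B y0 u0 (m - ((norm y0)\<^sup>2 + (norm u0)\<^sup>2) / 2)"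
proof -
  define P where "P n = C n + ((norm (Y n))\<^sup>2 + (norm (U n))\<^sup>2) / 2" for n
  have "(\<lambda>n. P n - m) \<longlonglongrightarrow> 0" using LIM_zero[OF minimizing] by (simp add: P_def)
  then have e: "(\<lambda>n. 4 * (P n - m)) \<longlonglongrightarrow> 0" by (rule tendsto_mult_right_zero)
  have close: "(norm (Y p - Y q))\<^sup>2 + (norm (U p - U q))\<^sup>2 \<le> 4 * (P p - m) + 4 * (P q - m)" for p q
    using fitzpatrick_penalized_near_min_close[OF minimal feasible feasible] by (simp add: P_def algebra_simps)
  have "(norm (Y p - Y q))\<^sup>2 \<le> 4 * (P p - m) + 4 * (P q - m)" for p q
    using close[of p q] zero_le_power2[of "norm (U p - U q)"] by linarith
  then have "Cauchy Y" using e by (rule Cauchy_if_norm_diff_sq_le)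
  have "(norm (U p - U q))\<^sup>2 \<le> 4 * (P p - m) + 4 * (P q - m)" for p q
    using close[of p q] zero_le_power2[of "norm (Y p - Y q)"] by linarith
  then have "Cauchy U" using e by (rule Cauchy_if_norm_diff_sq_le)
  with \<open>Cauchy Y\<close> obtain y0 u0 where Y: "Y \<longlonglongrightarrow> y0" and U: "U \<longlonglongrightarrow> u0"
    by (meson Cauchy_convergent_iff convergent_def)
  have "(\<lambda>n. P n - ((norm (Y n))\<^sup>2 + (norm (U n))\<^sup>2) / 2)
      \<longlonglongrightarrow> m - ((norm y0)\<^sup>2 + (norm u0)\<^sup>2) / 2"
    using minimizing Y U unfolding P_def by (intro tendsto_intros) auto
  then have "C \<longlonglongrightarrow> m - ((norm y0)\<^sup>2 + (norm u0)\<^sup>2) / 2" by (simp add: P_def)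
  from fitzpatrick_le_limit[OF Y U this feasible] show ?thesis by (rule that)
qed

lemma fitzpatrick_penalized_has_min:
  fixes B :: "'a::{real_inner,complete_space} \<Rightarrow> 'a set"
  assumes "maximally_monotone B"
  obtains y0 u0 c0 where "fitzpatrick_le B y0 u0 c0"
    and "\<And>y u c. fitzpatrick_le B y u c
           \<Longrightarrow> c0 + ((norm y0)\<^sup>2 + (norm u0)\<^sup>2) / 2 \<le> c + ((norm y)\<^sup>2 + (norm u)\<^sup>2) / 2"
proof -
  define S where "S = {c + ((norm y)\<^sup>2 + (norm u)\<^sup>2) / 2 | y u c. fitzpatrick_le B y u c}"
  define m where "m = Inf S"
  obtain v w where "w \<in> B v" using maximally_monotone_graph_nonempty[OF assms] .
  then have "S \<noteq> {}"
    using fitzpatrick_le_graph[OF maximally_monotone_imp_monotone_op[OF assms]] by (fastforce simp: S_def)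
  have "bdd_below S" using fitzpatrick_penalized_nonneg[OF assms] by (force simp: S_def bdd_below_def)
  have m_le: "m \<le> c + ((norm y)\<^sup>2 + (norm u)\<^sup>2) / 2" if "fitzpatrick_le B y u c" for y u c
    unfolding m_def using that \<open>bdd_below S\<close> by (intro cInf_lower) (auto simp: S_def)
  have "\<exists>y u c. fitzpatrick_le B y u c \<and> c + ((norm y)\<^sup>2 + (norm u)\<^sup>2) / 2 < m + inverse (Suc n)" for n
  proof -
    have "Inf S < m + inverse (Suc n)" by (simp add: m_def)
    then show ?thesis using cInf_less_iff[OF \<open>S \<noteq> {}\<close> \<open>bdd_below S\<close>] by (auto simp: S_def)
  qed
  then obtain Y U C where feasible: "\<And>n. fitzpatrick_le B (Y n) (U n) (C n)"
    and near: "\<And>n. C n + ((norm (Y n))\<^sup>2 + (norm (U n))\<^sup>2) / 2 < m + inverse (Suc n)"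
    by metis
  have lim: "(\<lambda>n. C n + ((norm (Y n))\<^sup>2 + (norm (U n))\<^sup>2) / 2) \<longlonglongrightarrow> m"
  proof (rule real_tendsto_sandwich)
    show "\<forall>\<^sub>F n in sequentially. m \<le> C n + ((norm (Y n))\<^sup>2 + (norm (U n))\<^sup>2) / 2"
      using m_le[OF feasible] by simp
    show "\<forall>\<^sub>F n in sequentially. C n + ((norm (Y n))\<^sup>2 + (norm (U n))\<^sup>2) / 2 \<le> m + inverse (Suc n)"
      using near by (simp add: less_imp_le)
    show "(\<lambda>n. m + inverse (real (Suc n))) \<longlonglongrightarrow> m"
      using tendsto_add[OF tendsto_const LIMSEQ_inverse_real_of_nat] by simp
  qed simp
  obtain y0 u0 where "fitzpatrick_le B y0 u0 (m - ((norm y0)\<^sup>2 + (norm u0)\<^sup>2) / 2)"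
    by (rule fitzpatrick_penalized_minimizing_converges[OF _ feasible lim]) (rule m_le)
  with m_le show ?thesis by (intro that) auto
qed

lemma fitzpatrick_penalized_min_variational:
  assumes "monotone_op B" "fitzpatrick_le B y0 u0 c0"
    and minimal: "\<And>y u c. fitzpatrick_le B y u c
               \<Longrightarrow> c0 + ((norm y0)\<^sup>2 + (norm u0)\<^sup>2) / 2 \<le> c + ((norm y)\<^sup>2 + (norm u)\<^sup>2) / 2"
    and "w \<in> B v"
  shows "c0 \<le> inner v w + inner y0 (v - y0) + inner u0 (w - u0)"
proof -
  (* Move from the minimiser towards (v, w, <v, w>), which is feasible, and let the step t tend to 0. *)
  define a b where "a = inner y0 (v - y0)" and "b = inner u0 (w - u0)"
  define p q where "p = (norm (v - y0))\<^sup>2" and "q = (norm (w - u0))\<^sup>2"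
  have "c0 \<le> inner v w + a + b + t * ((p + q) / 2)" if "0 < t" "t \<le> 1" for t
  proof -
    have "(1 - t) *\<^sub>R y + t *\<^sub>R v' = y + t *\<^sub>R (v' - y)" for y v' :: 'a
      by (simp add: algebra_simps)
    then have "fitzpatrick_le B (y0 + t *\<^sub>R (v - y0)) (u0 + t *\<^sub>R (w - u0)) ((1 - t) * c0 + t * inner v w)"
      using fitzpatrick_le_convex[OF assms(2) fitzpatrick_le_graph[OF assms(1,4)], of t] that
      by simp
    from minimal[OF this] have "c0 + ((norm y0)\<^sup>2 + (norm u0)\<^sup>2) / 2
        \<le> (1 - t) * c0 + t * inner v w
           + ((norm y0)\<^sup>2 + 2 * t * a + t\<^sup>2 * p + ((norm u0)\<^sup>2 + 2 * t * b + t\<^sup>2 * q)) / 2"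
      by (simp only: norm_add_scaleR_sq a_def b_def p_def q_def)
    then have "t * c0 \<le> t * (inner v w + a + b + t * ((p + q) / 2))"
      by (simp add: algebra_simps power2_eq_square add_divide_distrib)
    with \<open>0 < t\<close> show ?thesis by simp
  qed
  then show ?thesis unfolding a_def b_def by (rule le_if_le_add_small_multiples)
qed

lemma maximally_monotone_ex_neg_mem:
  fixes B :: "'a::{real_inner,complete_space} \<Rightarrow> 'a set"
  assumes "maximally_monotone B"
  shows "\<exists>y. - y \<in> B y"
proof -
  obtain y0 u0 c0 where feasible: "fitzpatrick_le B y0 u0 c0"
    and minimal: "\<And>y u c. fitzpatrick_le B y u c
               \<Longrightarrow> c0 + ((norm y0)\<^sup>2 + (norm u0)\<^sup>2) / 2 \<le> c + ((norm y)\<^sup>2 + (norm u)\<^sup>2) / 2"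
    using fitzpatrick_penalized_has_min[OF assms] by blast
  have graph_far: "(norm (y0 + u0))\<^sup>2 \<le> inner (w + y0) (v + u0)" if "w \<in> B v" for v w
  proof -
    have "c0 \<le> inner v w + inner y0 (v - y0) + inner u0 (w - u0)"
      using fitzpatrick_penalized_min_variational[OF maximally_monotone_imp_monotone_op[OF assms]
          feasible minimal that] .
    moreover have "inner y0 u0 \<le> c0" using inner_le_fitzpatrick[OF assms feasible] .
    moreover have "inner (w + y0) (v + u0)
        = inner v w + inner y0 (v - y0) + inner u0 (w - u0) + (norm y0)\<^sup>2 + (norm u0)\<^sup>2 + inner y0 u0"
      by (simp add: inner_add_left inner_add_right inner_diff_right inner_commute power2_norm_eq_inner)
    ultimately show ?thesis by (simp add: norm_add_sq)
  qed
  have "- y0 \<in> B (- u0)"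
  proof (rule maximally_monotoneD[OF assms])
    fix v w assume "w \<in> B v"
    then have "0 \<le> inner (w + y0) (v + u0)" using graph_far by (meson order_trans zero_le_power2)
    then show "0 \<le> inner (- y0 - w) (- u0 - v)" by (simp add: algebra_simps)
  qed
  then have "(norm (y0 + u0))\<^sup>2 \<le> 0" using graph_far by fastforce
  then have "u0 = - y0" by (simp add: add_eq_0_iff)
  with \<open>- y0 \<in> B (- u0)\<close> show ?thesis by auto
qed

lemma maximally_monotone_scaleR_diff:
  assumes "maximally_monotone B" "0 < \<alpha>"
  shows "maximally_monotone (\<lambda>y. (\<lambda>b. \<alpha> *\<^sub>R b - z) ` B y)"
  unfolding maximally_monotone_def monotone_op_def
proof (intro conjI allI impI)
  fix x y u v assume "u \<in> (\<lambda>b. \<alpha> *\<^sub>R b - z) ` B x" "v \<in> (\<lambda>b. \<alpha> *\<^sub>R b - z) ` B y"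
  then obtain b1 b2 where "b1 \<in> B x" "b2 \<in> B y" "u - v = \<alpha> *\<^sub>R (b1 - b2)"
    by (auto simp: algebra_simps)
  then show "0 \<le> inner (u - v) (x - y)"
    using monotone_opD[OF maximally_monotone_imp_monotone_op[OF assms(1)]] assms(2) by simp
next
  fix x c assume c: "\<forall>y v. v \<in> (\<lambda>b. \<alpha> *\<^sub>R b - z) ` B y \<longrightarrow> 0 \<le> inner (c - v) (x - y)"
  have "(1 / \<alpha>) *\<^sub>R (c + z) \<in> B x"
  proof (rule maximally_monotoneD[OF assms(1)])
    fix y v assume "v \<in> B y"
    then have "0 \<le> inner (c - (\<alpha> *\<^sub>R v - z)) (x - y)" using c by blast
    also have "c - (\<alpha> *\<^sub>R v - z) = \<alpha> *\<^sub>R ((1 / \<alpha>) *\<^sub>R (c + z) - v)"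
      using assms(2) by (simp add: algebra_simps)
    finally show "0 \<le> inner ((1 / \<alpha>) *\<^sub>R (c + z) - v) (x - y)"
      using assms(2) by (simp add: zero_le_mult_iff)
  qed
  moreover have "c = \<alpha> *\<^sub>R ((1 / \<alpha>) *\<^sub>R (c + z)) - z" using assms(2) by simp
  ultimately show "c \<in> (\<lambda>b. \<alpha> *\<^sub>R b - z) ` B x" by blast
qed

theorem minty_surjectivity:
  fixes B :: "'a::{real_inner,complete_space} \<Rightarrow> 'a set"
  assumes "maximally_monotone B" "0 < \<alpha>"
  obtains y b where "b \<in> B y" "z = y + \<alpha> *\<^sub>R b"
proof -
  obtain y where "- y \<in> (\<lambda>b. \<alpha> *\<^sub>R b - z) ` B y"
    using maximally_monotone_ex_neg_mem[OF maximally_monotone_scaleR_diff[OF assms]] by blast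
  then obtain b where "b \<in> B y" "- y = \<alpha> *\<^sub>R b - z" by blast
  then show ?thesis using that by (simp add: algebra_simps)
qed

lemma resolvent_unique:
  assumes "monotone_op B" "0 < \<alpha>" "b \<in> B y" "z = y + \<alpha> *\<^sub>R b" "b' \<in> B y'" "z = y' + \<alpha> *\<^sub>R b'"
  shows "y' = y"
proof -
  have diff: "y - y' = \<alpha> *\<^sub>R (b' - b)" using assms(4,6) by (simp add: algebra_simps)
  have "inner (b - b') (y - y') = - \<alpha> * (norm (b - b'))\<^sup>2"
    unfolding diff by (simp add: power2_norm_eq_inner algebra_simps inner_commute)
  moreover have "0 \<le> inner (b - b') (y - y')" using monotone_opD[OF assms(1,3,5)] .
  ultimately have "b = b'" using assms(2) by (simp add: mult_le_0_iff)
  then show ?thesis using assms(4,6) by simp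
qed

lemma resolvent_eq:
  fixes B :: "'a::{real_inner,complete_space} \<Rightarrow> 'a set"
  assumes "maximally_monotone B" "0 < \<alpha>"
  obtains b where "b \<in> B (resolvent \<alpha> B z)" "z = resolvent \<alpha> B z + \<alpha> *\<^sub>R b"
proof -
  obtain y b where yb: "b \<in> B y" "z = y + \<alpha> *\<^sub>R b" using minty_surjectivity[OF assms] .
  have "\<exists>!y. z \<in> (\<lambda>b. y + \<alpha> *\<^sub>R b) ` B y"
    using yb resolvent_unique[OF maximally_monotone_imp_monotone_op[OF assms(1)] assms(2) yb] by blast
  from theI'[OF this] show ?thesis using that unfolding resolvent_def by blast
qed

section \<open>The forward-backward step\<close>

lemma fb_point_inclusion:
  fixes A1 A2 :: "'a::{real_inner,complete_space} \<Rightarrow> 'a" and B :: "'a \<Rightarrow> 'a set" and x :: 'a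
  assumes "maximally_monotone B" "0 < a"
  defines "p \<equiv> fb_point A1 A2 B a x"
  shows "(1 / a) *\<^sub>R (x - p) - (A2 x - A2 p) \<in> (\<lambda>b. A2 p + b + A1 x) ` B p"
proof -
  obtain b where "b \<in> B p" "x - a *\<^sub>R (A1 x + A2 x) = p + a *\<^sub>R b"
    using resolvent_eq[OF assms(1,2)] unfolding p_def fb_point_def by blast
  moreover from this(2) have xp: "x - p = a *\<^sub>R (A1 x + A2 x + b)" by (simp add: algebra_simps)
  have "(1 / a) *\<^sub>R (x - p) - (A2 x - A2 p) = A2 p + b + A1 x"
    unfolding xp using assms(2) by (simp add: algebra_simps)
  ultimately show ?thesis by (metis image_eqI)
qed

lemma mult_diff_scaled_sq_le:
  fixes \<beta> D E :: real
  assumes "0 < \<beta>"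
  shows "D * E - \<beta> * D\<^sup>2 \<le> E\<^sup>2 / (4 * \<beta>)"
proof -
  have "4 * \<beta> * (D * E - \<beta> * D\<^sup>2) = E\<^sup>2 - (2 * \<beta> * D - E)\<^sup>2"
    by (simp add: power2_eq_square algebra_simps)
  also have "\<dots> \<le> E\<^sup>2" by simp
  finally show ?thesis using assms by (simp add: field_simps)
qed

lemma zer_sum_subset_T_set:
  fixes A1 A2 :: "'a::{real_inner,complete_space} \<Rightarrow> 'a" and B :: "'a \<Rightarrow> 'a set"
  assumes "0 < \<beta>" "cocoercive \<beta> A1" "monotone_op (\<lambda>y. {A2 y})" "maximally_monotone B"
    and "0 < a" "a \<le> 4 * \<beta> * \<delta>bar"
  shows "zer_sum A1 A2 B \<subseteq> T_set A1 A2 B \<delta>bar a x"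
proof
  fix z assume "z \<in> zer_sum A1 A2 B"
  then obtain b' where b': "b' \<in> B z" "A1 z + A2 z + b' = 0" unfolding zer_sum_def by auto
  define p where "p = fb_point A1 A2 B a x"
  obtain b where b: "b \<in> B p" "(1 / a) *\<^sub>R (x - p) - (A2 x - A2 p) = A2 p + b + A1 x"
    using fb_point_inclusion[OF assms(4,5)] unfolding p_def by blast
  define D where "D = A1 x - A1 z"
  have decomposition: "A2 p + b + A1 x = (A2 p - A2 z) + (b - b') + D"
    using b'(2) by (simp add: D_def algebra_simps eq_neg_iff_add_eq_0[symmetric])
  have "inner (A2 p + b + A1 x) (z - p)
      = inner (A2 p - A2 z) (z - p) + inner (b - b') (z - p) + inner D (z - x) + inner D (x - p)"
    unfolding decomposition by (simp add: inner_add_left inner_diff_right)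
  also have "\<dots> \<le> 0 + 0 + - \<beta> * (norm D)\<^sup>2 + norm D * norm (x - p)"
  proof (intro add_mono)
    show "inner (A2 p - A2 z) (z - p) \<le> 0"
      using monotone_opD[OF assms(3), of "A2 p" p "A2 z" z] by (simp add: inner_diff_right)
    show "inner (b - b') (z - p) \<le> 0"
      using monotone_opD[OF maximally_monotone_imp_monotone_op[OF assms(4)] b(1) b'(1)]
      by (simp add: inner_diff_right)
    show "inner D (z - x) \<le> - \<beta> * (norm D)\<^sup>2"
      using assms(2) unfolding cocoercive_def D_def
      by (metis inner_minus_right minus_diff_eq neg_le_iff_le mult_minus_left)
    show "inner D (x - p) \<le> norm D * norm (x - p)"
      by (rule order_trans[OF abs_ge_self Cauchy_Schwarz_ineq2])
  qed
  also have "\<dots> \<le> (norm (x - p))\<^sup>2 / (4 * \<beta>)"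
    using mult_diff_scaled_sq_le[OF assms(1)] by simp
  also have "\<dots> \<le> \<delta>bar / a * (norm (x - p))\<^sup>2"
  proof -
    have "1 / (4 * \<beta>) \<le> \<delta>bar / a" using assms(1,5,6) by (simp add: field_simps)
    from mult_right_mono[OF this zero_le_power2] show ?thesis by simp
  qed
  finally show "z \<in> T_set A1 A2 B \<delta>bar a x"
    unfolding T_set_def Let_def p_def[symmetric] b(2) by simp
qed

lemma conceptual_alg_step_size_bounds:
  assumes alg: "conceptual_alg A1 A2 B \<theta> \<delta> \<delta>bar am1 meth x \<alpha> K"
    and "0 < \<theta>" "\<theta> \<le> 1" "0 < am1" "k \<le> K"
  shows "0 < \<alpha> k \<and> \<alpha> k \<le> am1"
proof -
  have shrink: "0 < s * \<theta> ^ j \<and> s * \<theta> ^ j \<le> am1" if "0 < s" "s \<le> am1" for s :: real and j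
  proof -
    have "s * \<theta> ^ j \<le> s" using that \<open>0 < \<theta>\<close> \<open>\<theta> \<le> 1\<close> by (simp add: mult_left_le power_le_one)
    then have "s * \<theta> ^ j \<le> am1" using \<open>s \<le> am1\<close> by linarith
    with that \<open>0 < \<theta>\<close> show ?thesis by simp
  qed
  have step: "\<exists>j. \<alpha> k = prev_step am1 \<alpha> k * \<theta> ^ j" if "k \<le> K" for k
    using alg that unfolding conceptual_alg_def by blast
  show ?thesis
    using \<open>k \<le> K\<close>
  proof (induction k)
    case 0
    then obtain j where "\<alpha> 0 = am1 * \<theta> ^ j" using step[of 0] by (auto simp: prev_step_def)
    then show ?case using shrink[OF \<open>0 < am1\<close> order_refl] by simp
  next
    case (Suc k)
    then obtain j where "\<alpha> (Suc k) = \<alpha> k * \<theta> ^ j" using step[of "Suc k"] by (auto simp: prev_step_def)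
    then show ?case using Suc shrink by simp
  qed
qed

theorem lemma4p3:
  fixes A1 A2 :: "'a::{real_inner,complete_space} \<Rightarrow> 'a"
    and B :: "'a \<Rightarrow> 'a set"
    and \<beta> \<theta> \<delta> \<delta>bar am1 :: real
    and meth :: nat
    and x :: "nat \<Rightarrow> 'a" and \<alpha> :: "nat \<Rightarrow> real" and K k :: nat
  assumes "\<beta> > 0" and "cocoercive \<beta> A1"
    and "maximally_monotone (\<lambda>y. {A2 y})" and "uniformly_continuous_on UNIV A2"
    and "maximally_monotone B"
    and "zer_sum A1 A2 B \<noteq> {}"
    and "0 < \<theta>" "\<theta> < 1" "0 < \<delta>" "\<delta> < 1" "\<delta>bar > 0" "1 - \<delta> - \<delta>bar > 0"
    and "am1 > 0" "am1 \<le> 4 * \<beta> * \<delta>bar"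
    and "meth = 1 \<or> meth = 2"
    and "conceptual_alg A1 A2 B \<theta> \<delta> \<delta>bar am1 meth x \<alpha> K"
    and "k \<le> K"
  shows "(1 / \<alpha> k) *\<^sub>R (x k - fb_point A1 A2 B (\<alpha> k) (x k))
            - (A2 (x k) - A2 (fb_point A1 A2 B (\<alpha> k) (x k)))
           \<in> (\<lambda>b. A2 (fb_point A1 A2 B (\<alpha> k) (x k)) + b + A1 (x k)) ` B (fb_point A1 A2 B (\<alpha> k) (x k))
         \<and> zer_sum A1 A2 B \<subseteq> T_set A1 A2 B \<delta>bar (\<alpha> k) (x k)"
proof -
  have "0 < \<alpha> k" "\<alpha> k \<le> am1"
    using conceptual_alg_step_size_bounds[OF assms(16,7) _ assms(13,17)] assms(8) by auto
  then have "\<alpha> k \<le> 4 * \<beta> * \<delta>bar" using assms(14) by linarith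
  show ?thesis
    using fb_point_inclusion[OF assms(5) \<open>0 < \<alpha> k\<close>]
      zer_sum_subset_T_set[OF assms(1,2) maximally_monotone_imp_monotone_op[OF assms(3)] assms(5)
        \<open>0 < \<alpha> k\<close> \<open>\<alpha> k \<le> 4 * \<beta> * \<delta>bar\<close>]
    by (rule conjI)
qed

end
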